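(* For any positive integers $r,k$, the set $D_{r,k}$ contains at least one non-zero integer.
   Context: For positive integers $v,b,r,k$, a $(v,b,r,k)$-configuration is a connected bipartite graph with $v$ vertices on one side, each of degree $r$, and $b$ vertices on the other side, each of degree $k$, containing no cycle of length $4$. By convention the empty graph (with $v=b=0$) is also regarded as a configuration. A tuple $(v,b,r,k)$ is configurable if a $(v,b,r,k)$-configuration exists. Let $\mathbb{N}_0=\{0,1,2,\dots\}$ and define $$D_{r,k}=\left\{d\in\mathbb{N}_0:\left(d\tfrac{k}{\gcd(r,k)},\,d\tfrac{r}{\gcd(r,k)},\,r,\,k\right)\text{ is configurable}\right\}.$$ *)

theory Defs
  imports Main
begin

text \<open>A bipartite graph is encoded by a set of points P (one side), a set of lines L
  (other side), both subsets of nat, and an incidence (edge) set I \<subseteq> P \<times> L.\<close>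

definition bip_adj :: "(nat \<times> nat) set \<Rightarrow> (nat + nat) rel" where
  "bip_adj I = {(x, y). \<exists>p l. (p, l) \<in> I \<and>
      ((x = Inl p \<and> y = Inr l) \<or> (x = Inr l \<and> y = Inl p))}"

definition bip_connected :: "nat set \<Rightarrow> nat set \<Rightarrow> (nat \<times> nat) set \<Rightarrow> bool" where
  "bip_connected P L I \<longleftrightarrow>
     (\<forall>x \<in> P <+> L. \<forall>y \<in> P <+> L. (x, y) \<in> (bip_adj I)\<^sup>*)"

definition no_4_cycle :: "(nat \<times> nat) set \<Rightarrow> bool" where
  "no_4_cycle I \<longleftrightarrow> \<not> (\<exists>p1 p2 l1 l2. p1 \<noteq> p2 \<and> l1 \<noteq> l2 \<and>
      (p1, l1) \<in> I \<and> (p1, l2) \<in> I \<and> (p2, l1) \<in> I \<and> (p2, l2) \<in> I)"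

definition is_configuration ::
  "nat set \<Rightarrow> nat set \<Rightarrow> (nat \<times> nat) set \<Rightarrow> nat \<Rightarrow> nat \<Rightarrow> nat \<Rightarrow> nat \<Rightarrow> bool" where
  "is_configuration P L I v b r k \<longleftrightarrow>
     finite P \<and> finite L \<and> card P = v \<and> card L = b \<and> I \<subseteq> P \<times> L \<and>
     (\<forall>p \<in> P. card {l. (p, l) \<in> I} = r) \<and>
     (\<forall>l \<in> L. card {p. (p, l) \<in> I} = k) \<and>
     bip_connected P L I \<and> no_4_cycle I"

text \<open>The empty graph (v = b = 0) counts as a configuration by convention.\<close>
definition configurable :: "nat \<Rightarrow> nat \<Rightarrow> nat \<Rightarrow> nat \<Rightarrow> bool" where
  "configurable v b r k \<longleftrightarrow> (v = 0 \<and> b = 0) \<or> (\<exists>P L I. is_configuration P L I v b r k)"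

definition D_set :: "nat \<Rightarrow> nat \<Rightarrow> nat set" where
  "D_set r k = {d. configurable (d * (k div gcd r k)) (d * (r div gcd r k)) r k}"

end

theory Submission
  imports Defs
begin

text \<open>Take \<open>q = (r - 1)(k - 1) + 1\<close>, points \<open>(i, x)\<close> with \<open>i < k\<close>, \<open>x \<in> \<int>/q\<close>, and lines
  \<open>(a, b)\<close> with \<open>a < r\<close>, \<open>b \<in> \<int>/q\<close>, the point lying on the line iff \<open>x = a i + b\<close>.
  A point lies on exactly one line of each slope and a line meets each column once, so the
  degrees are \<open>r\<close> and \<open>k\<close>. Two lines through two points in different columns give
  \<open>q | (a\<^sub>1 - a\<^sub>2)(i\<^sub>1 - i\<^sub>2)\<close>, a product of absolute value below \<open>q\<close>, so the lines coincide
  and there is no 4-cycle. Lines of slopes 0 and 1 make the graph connected. The result has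
  \<open>kq\<close> points and \<open>rq\<close> lines, so \<open>d = q gcd(r, k)\<close> lies in \<open>D\<^sub>r\<^sub>,\<^sub>k\<close>.\<close>

lemma less_mult_add_multE:
  fixes p k q :: nat
  assumes "p < k * q"
  obtains i x where "p = i + k * x" and "i < k" and "x < q"
proof
  show "p = p mod k + k * (p div k)" by (simp add: mod_mult_div_eq)
  have "0 < k" using assms by (cases k) auto
  then show "p mod k < k" by simp
  show "p div k < q" using assms by (simp add: less_mult_imp_div_less mult.commute)
qed

lemma add_mult_less_mult:
  fixes i k x q :: nat
  assumes "i < k" and "x < q"
  shows "i + k * x < k * q"
proof -
  have "i + k * x < k * Suc x" using assms(1) by simp
  also have "\<dots> \<le> k * q" using assms(2) by (intro mult_le_mono2) simp
  finally show ?thesis .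
qed

lemma add_mult_eq_add_mult_iff:
  fixes i i' k x x' :: nat
  assumes "i < k" and "i' < k"
  shows "i + k * x = i' + k * x' \<longleftrightarrow> i = i' \<and> x = x'"
proof
  assume eq: "i + k * x = i' + k * x'"
  have "(i + k * x) mod k = (i' + k * x') mod k" and "(i + k * x) div k = (i' + k * x') div k"
    using eq by simp_all
  then show "i = i' \<and> x = x'" using assms by simp
qed simp

lemma mod_add_left_cancel_less:
  fixes c b b' q :: nat
  assumes "(c + b) mod q = (c + b') mod q" and "b < q" and "b' < q"
  shows "b = b'"
  using assms by (smt (verit, ccfv_SIG) add.assoc add_left_cancel mod_less nat_mod_eq_iff)

lemma ex_mod_add_eq:
  fixes c x q :: nat
  assumes "x < q"
  shows "\<exists>b < q. (c + b) mod q = x"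
proof (intro exI conjI)
  show "(x + q - c mod q) mod q < q" using assms by simp
  have "(c + (x + q - c mod q) mod q) mod q = (c mod q + (x + q - c mod q)) mod q"
    by (metis mod_add_left_eq mod_add_right_eq)
  also have "c mod q + (x + q - c mod q) = x + q"
    using assms by (simp add: less_imp_le_nat trans_le_add2)
  finally show "(c + (x + q - c mod q) mod q) mod q = x" using assms by simp
qed

lemma int_dvd_eq_0_if_abs_less:
  fixes m :: int and q :: nat
  assumes "int q dvd m" and "\<bar>m\<bar> < int q"
  shows "m = 0"
proof (rule ccontr)
  assume "m \<noteq> 0"
  with assms(1) have "\<bar>int q\<bar> \<le> \<bar>m\<bar>" by (intro dvd_imp_le_int)
  with assms(2) show False by simp
qed

lemma int_dvd_diff_if_mod_eq:
  fixes m n q :: nat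
  assumes "m mod q = n mod q"
  shows "int q dvd int m - int n"
  using assms by (metis mod_eq_dvd_iff of_nat_mod)

lemma bip_adj_sym: "sym (bip_adj I)"
  unfolding sym_def bip_adj_def by blast

lemma common_line_rtrancl:
  assumes "(p, l) \<in> I" and "(p', l) \<in> I"
  shows "(Inl p, Inl p') \<in> (bip_adj I)\<^sup>*"
proof -
  have "(Inl p, Inr l) \<in> bip_adj I" and "(Inr l, Inl p') \<in> bip_adj I"
    using assms by (auto simp: bip_adj_def)
  then show ?thesis by (meson converse_rtrancl_into_rtrancl r_into_rtrancl)
qed

lemma bip_connectedI:
  assumes "\<And>v. v \<in> P <+> L \<Longrightarrow> (v\<^sub>0, v) \<in> (bip_adj I)\<^sup>*"
  shows "bip_connected P L I"
  unfolding bip_connected_def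
proof (intro ballI)
  fix v w assume "v \<in> P <+> L" and "w \<in> P <+> L"
  then have "(v, v\<^sub>0) \<in> (bip_adj I)\<^sup>*" and "(v\<^sub>0, w) \<in> (bip_adj I)\<^sup>*"
    using assms sym_rtrancl[OF bip_adj_sym] by (auto dest: symD)
  then show "(v, w) \<in> (bip_adj I)\<^sup>*" by (rule rtrancl_trans)
qed

text \<open>Point \<open>i + k x\<close> stands for \<open>(i, x)\<close> and line \<open>a + r b\<close> for the line of slope \<open>a\<close> and
  intercept \<open>b\<close>, with \<open>i < k\<close>, \<open>a < r\<close> and \<open>x, b < q\<close>.\<close>

definition affine_incidence :: "nat \<Rightarrow> nat \<Rightarrow> nat \<Rightarrow> (nat \<times> nat) set" where
  "affine_incidence r k q =
     {(p, l). p < k * q \<and> l < r * q \<and> p div k = (l mod r * (p mod k) + l div r) mod q}"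

lemma affine_incidence_iff:
  assumes "i < k" and "x < q" and "a < r" and "b < q"
  shows "(i + k * x, a + r * b) \<in> affine_incidence r k q \<longleftrightarrow> x = (a * i + b) mod q"
  using assms add_mult_less_mult[of i k x q] add_mult_less_mult[of a r b q]
  by (simp add: affine_incidence_def)

lemma affine_incidenceE:
  assumes "(p, l) \<in> affine_incidence r k q"
  obtains i x a b where "p = i + k * x" and "l = a + r * b"
    and "i < k" and "x < q" and "a < r" and "b < q" and "x = (a * i + b) mod q"
proof -
  from assms have "p < k * q" and "l < r * q" by (auto simp: affine_incidence_def)
  then obtain i x a b where "p = i + k * x" "i < k" "x < q" "l = a + r * b" "a < r" "b < q"
    by (metis less_mult_add_multE)
  with assms that show thesis by (simp add: affine_incidence_iff)
qed

lemma affine_incidence_subset: "affine_incidence r k q \<subseteq> {..<k * q} \<times> {..<r * q}"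
  by (auto simp: affine_incidence_def)

lemma card_affine_lines_through:
  assumes "i < k" and "x < q"
  shows "card {l. (i + k * x, l) \<in> affine_incidence r k q} = r"
proof -
  have "\<forall>a. \<exists>b. b < q \<and> (a * i + b) mod q = x"
    using ex_mod_add_eq[OF assms(2)] by blast
  then obtain \<beta> where \<beta>: "\<And>a. \<beta> a < q \<and> (a * i + \<beta> a) mod q = x"
    by metis
  have "{l. (i + k * x, l) \<in> affine_incidence r k q} = (\<lambda>a. a + r * \<beta> a) ` {..<r}"
  proof (intro equalityI subsetI)
    fix l assume "l \<in> {l. (i + k * x, l) \<in> affine_incidence r k q}"
    then obtain i' x' a b where "i + k * x = i' + k * x'" and l: "l = a + r * b"
      and "i' < k" "x' < q" "a < r" "b < q" "x' = (a * i' + b) mod q"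
      by (auto elim: affine_incidenceE)
    then have "a < r" and "(a * i + b) mod q = (a * i + \<beta> a) mod q"
      using assms(1) \<beta> by (simp_all add: add_mult_eq_add_mult_iff)
    then have "b = \<beta> a" using \<beta> \<open>b < q\<close> by (metis mod_add_left_cancel_less)
    then show "l \<in> (\<lambda>a. a + r * \<beta> a) ` {..<r}" using l \<open>a < r\<close> by blast
  next
    fix l assume "l \<in> (\<lambda>a. a + r * \<beta> a) ` {..<r}"
    then show "l \<in> {l. (i + k * x, l) \<in> affine_incidence r k q}"
      using assms \<beta> by (auto simp: affine_incidence_iff)
  qed
  moreover have "inj_on (\<lambda>a. a + r * \<beta> a) {..<r}"
    by (rule inj_onI) (metis lessThan_iff mod_less mod_mult_self2)
  ultimately show ?thesis by (simp add: card_image)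
qed

lemma card_affine_points_on:
  assumes "a < r" and "b < q"
  shows "card {p. (p, a + r * b) \<in> affine_incidence r k q} = k"
proof -
  have "{p. (p, a + r * b) \<in> affine_incidence r k q} = (\<lambda>i. i + k * ((a * i + b) mod q)) ` {..<k}"
  proof (intro equalityI subsetI)
    fix p assume "p \<in> {p. (p, a + r * b) \<in> affine_incidence r k q}"
    then obtain i x a' b' where "p = i + k * x" "a + r * b = a' + r * b'"
      "i < k" "a' < r" "x = (a' * i + b') mod q"
      by (auto elim: affine_incidenceE)
    then show "p \<in> (\<lambda>i. i + k * ((a * i + b) mod q)) ` {..<k}"
      using assms(1) by (auto simp: add_mult_eq_add_mult_iff)
  next
    fix p assume "p \<in> (\<lambda>i. i + k * ((a * i + b) mod q)) ` {..<k}"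
    then show "p \<in> {p. (p, a + r * b) \<in> affine_incidence r k q}"
      using assms by (auto simp: affine_incidence_iff)
  qed
  moreover have "inj_on (\<lambda>i. i + k * ((a * i + b) mod q)) {..<k}"
    by (rule inj_onI) (metis lessThan_iff mod_less mod_mult_self2)
  ultimately show ?thesis by (simp add: card_image)
qed

lemma affine_line_unique:
  fixes a1 a2 b1 b2 i1 i2 r k q :: nat
  assumes "a1 < r" "a2 < r" "b1 < q" "b2 < q" "i1 < k" "i2 < k" "i1 \<noteq> i2"
    and "(r - 1) * (k - 1) < q"
    and "(a1 * i1 + b1) mod q = (a2 * i1 + b2) mod q"
    and "(a1 * i2 + b1) mod q = (a2 * i2 + b2) mod q"
  shows "a1 = a2 \<and> b1 = b2"
proof -
  let ?m = "(int a1 - int a2) * (int i1 - int i2)"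
  have "int q dvd (int (a1 * i1 + b1) - int (a2 * i1 + b2))
                   - (int (a1 * i2 + b1) - int (a2 * i2 + b2))"
    using assms(9,10) by (intro dvd_diff int_dvd_diff_if_mod_eq)
  also have "(int (a1 * i1 + b1) - int (a2 * i1 + b2)) - (int (a1 * i2 + b1) - int (a2 * i2 + b2))
      = ?m"
    by (simp add: algebra_simps)
  finally have "int q dvd ?m" .
  moreover have "\<bar>?m\<bar> < int q"
  proof -
    have "\<bar>int a1 - int a2\<bar> \<le> int (r - 1)" and "\<bar>int i1 - int i2\<bar> \<le> int (k - 1)"
      using assms(1,2,5,6) by auto
    then have "\<bar>?m\<bar> \<le> int (r - 1) * int (k - 1)"
      by (simp add: abs_mult mult_mono)
    also have "\<dots> < int q" using assms(8) by (simp flip: of_nat_mult)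
    finally show ?thesis .
  qed
  ultimately have "?m = 0" by (rule int_dvd_eq_0_if_abs_less)
  then have "a1 = a2" using assms(7) by simp
  moreover from this have "b1 = b2"
    using assms(3,4,9) by (metis mod_add_left_cancel_less)
  ultimately show ?thesis ..
qed

lemma affine_incidence_no_4_cycle:
  assumes "(r - 1) * (k - 1) < q"
  shows "no_4_cycle (affine_incidence r k q)"
  unfolding no_4_cycle_def
proof clarify
  fix p1 p2 l1 l2
  assume "p1 \<noteq> p2" "l1 \<noteq> l2"
    and "(p1, l1) \<in> affine_incidence r k q" "(p1, l2) \<in> affine_incidence r k q"
    and "(p2, l1) \<in> affine_incidence r k q" "(p2, l2) \<in> affine_incidence r k q"
  obtain i1 x1 a1 b1 where p1: "p1 = i1 + k * x1" and l1: "l1 = a1 + r * b1"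
    and bounds1: "i1 < k" "x1 < q" "a1 < r" "b1 < q" and x1: "x1 = (a1 * i1 + b1) mod q"
    using \<open>(p1, l1) \<in> _\<close> by (rule affine_incidenceE)
  obtain i2 x2 a2 b2 where p2: "p2 = i2 + k * x2" and l2: "l2 = a2 + r * b2"
    and bounds2: "i2 < k" "x2 < q" "a2 < r" "b2 < q" and x2: "x2 = (a2 * i2 + b2) mod q"
    using \<open>(p2, l2) \<in> _\<close> by (rule affine_incidenceE)
  have x1': "x1 = (a2 * i1 + b2) mod q" and x2': "x2 = (a1 * i2 + b1) mod q"
    using \<open>(p1, l2) \<in> _\<close> \<open>(p2, l1) \<in> _\<close> p1 p2 l1 l2 bounds1 bounds2
    by (simp_all add: affine_incidence_iff)
  show False
  proof (cases "i1 = i2")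
    case True
    then have "x1 = x2" using x1 x2' by simp
    with True p1 p2 \<open>p1 \<noteq> p2\<close> show False by simp
  next
    case False
    have "a1 = a2 \<and> b1 = b2"
      using x1 x1' x2 x2' bounds1 bounds2
      by (intro affine_line_unique[OF _ _ _ _ _ _ False assms]) simp_all
    with l1 l2 \<open>l1 \<noteq> l2\<close> show False by simp
  qed
qed

lemma affine_incidence_connected:
  assumes "0 < r" and "0 < k" and "q = 1 \<or> 1 < r \<and> 1 < k"
  shows "bip_connected {..<k * q} {..<r * q} (affine_incidence r k q)"
proof (rule bip_connectedI)
  let ?I = "affine_incidence r k q"
  have column_0: "(Inl 0, Inl (k * x)) \<in> (bip_adj ?I)\<^sup>*" if "x < q" for x
    using that
  proof (induction x)
    case 0
    then show ?case by simp
  next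
    case (Suc x)
    then have "1 < r" "1 < k" "x < q" using assms(3) by auto
    \<comment> \<open>\<open>(0, x)\<close> and \<open>(1, x + 1)\<close> lie on the line of slope 1 and intercept \<open>x\<close>,
      \<open>(1, x + 1)\<close> and \<open>(0, x + 1)\<close> on the line of slope 0 and intercept \<open>x + 1\<close>\<close>
    have "(0 + k * x, 1 + r * x) \<in> ?I" and "(1 + k * Suc x, 1 + r * x) \<in> ?I"
      using Suc.prems \<open>1 < r\<close> \<open>1 < k\<close> \<open>x < q\<close>
      by (simp_all only: affine_incidence_iff) simp_all
    moreover have "(1 + k * Suc x, 0 + r * Suc x) \<in> ?I" and "(0 + k * Suc x, 0 + r * Suc x) \<in> ?I"
      using Suc.prems \<open>1 < r\<close> \<open>1 < k\<close> by (simp_all only: affine_incidence_iff) simp_all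
    ultimately have "(Inl (k * x), Inl (k * Suc x)) \<in> (bip_adj ?I)\<^sup>*"
      by (metis common_line_rtrancl rtrancl_trans add_0)
    with Suc show ?case by (meson Suc_lessD rtrancl_trans)
  qed
  have point: "(Inl 0, Inl p) \<in> (bip_adj ?I)\<^sup>*" if "p < k * q" for p
  proof -
    obtain i x where p: "p = i + k * x" and "i < k" "x < q"
      using \<open>p < k * q\<close> by (rule less_mult_add_multE)
    have "(i + k * x, 0 + r * x) \<in> ?I" and "(0 + k * x, 0 + r * x) \<in> ?I"
      using \<open>i < k\<close> \<open>x < q\<close> assms(1,2) by (simp_all only: affine_incidence_iff) simp_all
    then have "(Inl (k * x), Inl p) \<in> (bip_adj ?I)\<^sup>*"
      using p by (metis common_line_rtrancl add_0)
    with column_0 \<open>x < q\<close> show ?thesis by (meson rtrancl_trans)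
  qed
  have line: "(Inl 0, Inr l) \<in> (bip_adj ?I)\<^sup>*" if "l < r * q" for l
  proof -
    obtain a b where l: "l = a + r * b" and "a < r" "b < q"
      using \<open>l < r * q\<close> by (rule less_mult_add_multE)
    then have "(0 + k * b, l) \<in> ?I"
      using assms(2) by (simp only: affine_incidence_iff) simp
    then have "(Inl (k * b), Inr l) \<in> bip_adj ?I" by (auto simp: bip_adj_def)
    moreover have "k * b < k * q" using assms(2) \<open>b < q\<close> by simp
    ultimately show ?thesis using point by (meson rtrancl_into_rtrancl)
  qed
  show "(Inl 0, v) \<in> (bip_adj ?I)\<^sup>*" if "v \<in> {..<k * q} <+> {..<r * q}" for v
    using that point line by auto
qed

lemma affine_incidence_is_configuration:
  assumes "0 < r" and "0 < k" and "(r - 1) * (k - 1) < q" and "q = 1 \<or> 1 < r \<and> 1 < k"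
  shows "is_configuration {..<k * q} {..<r * q} (affine_incidence r k q) (k * q) (r * q) r k"
proof -
  have "card {l. (p, l) \<in> affine_incidence r k q} = r" if "p < k * q" for p
    using that by (auto elim: less_mult_add_multE simp: card_affine_lines_through)
  moreover have "card {p. (p, l) \<in> affine_incidence r k q} = k" if "l < r * q" for l
    using that by (auto elim: less_mult_add_multE simp: card_affine_points_on)
  ultimately show ?thesis
    using affine_incidence_subset affine_incidence_connected[OF assms(1,2,4)]
      affine_incidence_no_4_cycle[OF assms(3)]
    by (simp add: is_configuration_def)
qed

theorem lemma3:
  fixes r k :: nat
  assumes "0 < r" and "0 < k"
  shows "\<exists>d \<in> D_set r k. d \<noteq> 0"
proof
  define q where "q = (r - 1) * (k - 1) + 1"
  have "q = 1 \<or> 1 < r \<and> 1 < k" using assms by (auto simp: q_def)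
  then have "is_configuration {..<k * q} {..<r * q} (affine_incidence r k q) (k * q) (r * q) r k"
    using assms by (intro affine_incidence_is_configuration) (simp_all add: q_def)
  then have "configurable (k * q) (r * q) r k" by (auto simp: configurable_def)
  moreover have "q * gcd r k * (k div gcd r k) = k * q" and "q * gcd r k * (r div gcd r k) = r * q"
    by simp_all
  ultimately show "q * gcd r k \<in> D_set r k" unfolding D_set_def by (simp only: mem_Collect_eq)
  show "q * gcd r k \<noteq> 0" using assms by (simp add: q_def)
qed

end
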